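(* Let $\rho_1,\rho_2,k_1,k_2,L>0$ and $0<\alpha<1$, take $\eta=0$, and let $\mathcal{A}$ be the operator on $\mathcal{H}$ described in the context. Then $\mathcal{A}$ is not invertible; consequently $0\in\sigma(\mathcal{A})$.
   Context: Set $\mu(\xi)=|\xi|^{(2\alpha-1)/2}$ for $\xi\in\mathbb{R}$ and $\mathfrak{C}=\pi^{-1}\sin(\alpha\pi)$. All function spaces are complex. Let $\mathbb{H}^1_0=\{(u,v)\in H^1(-L,0)\times H^1(0,L):\ u(-L)=v(L)=0,\ u(0)=v(0)\}$, $\mathbb{L}^2=L^2(-L,0)\times L^2(0,L)$, and $\mathcal{H}=\mathbb{H}^1_0\times\mathbb{L}^2\times L^2(\mathbb{R};\mathbb{L}^2)$, whose elements are written $\mathbb{U}=(u,v,U,V,\varphi_1,\varphi_2)$ with $(u,v)\in\mathbb{H}^1_0$, $(U,V)\in\mathbb{L}^2$, $\varphi_1\in L^2(\mathbb{R};L^2(-L,0))$, $\varphi_2\in L^2(\mathbb{R};L^2(0,L))$ (functions of $(x,\xi)$). $\mathcal{H}$ is a Hilbert space with inner product $\langle\mathbb{U},\tilde{\mathbb{U}}\rangle_{\mathcal H}=\rho_1\int_{-L}^0U\overline{\tilde U}dx+\rho_2\int_0^LV\overline{\tilde V}dx+k_1\int_{-L}^0u_x\overline{\tilde u_x}dx+k_2\int_0^Lv_x\overline{\tilde v_x}dx+\mathfrak{C}\int_{\mathbb R}\int_{-L}^0\varphi_1\overline{\tilde\varphi_1}\,dx\,d\xi+\mathfrak{C}\int_{\mathbb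 R}\int_0^L\varphi_2\overline{\tilde\varphi_2}\,dx\,d\xi$. The domain $\mathcal{D}(\mathcal{A})$ is the set of $\mathbb{U}=(u,v,U,V,\varphi_1,\varphi_2)\in\mathcal{H}$ such that $(U,V)\in\mathbb{H}^1_0$, $u\in H^2(-L,0)$, $v\in H^2(0,L)$, $k_1u_x(0)=k_2v_x(0)$, $|\xi|\varphi_1\in L^2(\mathbb{R};L^2(-L,0))$, $-(|\xi|^2+\eta)\varphi_1+\mu(\xi)U\in L^2(\mathbb{R};L^2(-L,0))$, $|\xi|\varphi_2\in L^2(\mathbb{R};L^2(0,L))$, $-(|\xi|^2+\eta)\varphi_2+\mu(\xi)V\in L^2(\mathbb{R};L^2(0,L))$; and $$\mathcal{A}\mathbb{U}=\Big(U,\ V,\ \tfrac{1}{\rho_1}\big[k_1u_{xx}-\mathfrak{C}\textstyle\int_{\mathbb R}\mu(\xi)\varphi_1(\cdot,\xi)d\xi\big],\ \tfrac{1}{\rho_2}\big[k_2v_{xx}-\mathfrak{C}\textstyle\int_{\mathbb R}\mu(\xi)\varphi_2(\cdot,\xi)d\xi\big],\ -(|\xi|^2+\eta)\varphi_1+\mu(\xi)U,\ -(|\xi|^2+\eta)\varphi_2+\mu(\xi)V\Big).$$ *)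

theory Defs
  imports "HOL-Analysis.Analysis"
begin

text \<open>States U = (u, v, U, V, phi1, phi2).  u, U are functions on (-L,0),
  v, V on (0,L), phi1 phi2 are functions of (x, xi).  Elements of the
  L2/Sobolev spaces are represented by (raw) functions; equality in the
  Hilbert space is equality modulo the Hilbert norm (see Heq).\<close>

type_synonym state =
  "(real \<Rightarrow> complex) \<times> (real \<Rightarrow> complex) \<times> (real \<Rightarrow> complex) \<times> (real \<Rightarrow> complex)
   \<times> (real \<Rightarrow> real \<Rightarrow> complex) \<times> (real \<Rightarrow> real \<Rightarrow> complex)"

definition mu :: "real \<Rightarrow> real \<Rightarrow> real" where
  "mu \<alpha> \<xi> = \<bar>\<xi>\<bar> powr ((2 * \<alpha> - 1) / 2)"

definition frakC :: "real \<Rightarrow> real" where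
  "frakC \<alpha> = sin (\<alpha> * pi) / pi"

definition L2on :: "'a::euclidean_space set \<Rightarrow> ('a \<Rightarrow> complex) \<Rightarrow> bool" where
  "L2on S f \<longleftrightarrow> set_borel_measurable lborel S f \<and>
                 set_integrable lborel S (\<lambda>x. (cmod (f x))\<^sup>2)"

text \<open>u is (the absolutely continuous representative of) an H^1(a,b) function
  with derivative g in L2(a,b).\<close>
definition has_L2_deriv :: "real \<Rightarrow> real \<Rightarrow> (real \<Rightarrow> complex) \<Rightarrow> (real \<Rightarrow> complex) \<Rightarrow> bool" where
  "has_L2_deriv a b u g \<longleftrightarrow> L2on {a..b} g \<and>
     (\<forall>x\<in>{a..b}. u x = u a + (LINT t:{a..x}|lborel. g t))"

definition H1 :: "real \<Rightarrow> real \<Rightarrow> (real \<Rightarrow> complex) \<Rightarrow> bool" where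
  "H1 a b u \<longleftrightarrow> (\<exists>g. has_L2_deriv a b u g)"

definition d1 :: "real \<Rightarrow> real \<Rightarrow> (real \<Rightarrow> complex) \<Rightarrow> (real \<Rightarrow> complex)" where
  "d1 a b u = (SOME g. has_L2_deriv a b u g)"

definition d2 :: "real \<Rightarrow> real \<Rightarrow> (real \<Rightarrow> complex) \<Rightarrow> (real \<Rightarrow> complex)" where
  "d2 a b u = (SOME h. \<exists>g. has_L2_deriv a b u g \<and> has_L2_deriv a b g h)"

definition H10 :: "real \<Rightarrow> (real \<Rightarrow> complex) \<Rightarrow> (real \<Rightarrow> complex) \<Rightarrow> bool" where
  "H10 L u v \<longleftrightarrow> H1 (-L) 0 u \<and> H1 0 L v \<and> u (-L) = 0 \<and> v L = 0 \<and> u 0 = v 0"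

definition inH :: "real \<Rightarrow> state \<Rightarrow> bool" where
  "inH L W = (case W of (u, v, U, V, \<phi>1, \<phi>2) \<Rightarrow>
     H10 L u v \<and> L2on {-L..0} U \<and> L2on {0..L} V \<and>
     L2on ({-L..0} \<times> UNIV) (\<lambda>(x, \<xi>). \<phi>1 x \<xi>) \<and>
     L2on ({0..L} \<times> UNIV) (\<lambda>(x, \<xi>). \<phi>2 x \<xi>))"

definition Hnorm2 :: "real \<Rightarrow> real \<Rightarrow> real \<Rightarrow> real \<Rightarrow> real \<Rightarrow> real \<Rightarrow> state \<Rightarrow> real" where
  "Hnorm2 \<rho>1 \<rho>2 k1 k2 \<alpha> L W = (case W of (u, v, U, V, \<phi>1, \<phi>2) \<Rightarrow>
       \<rho>1 * (LINT x:{-L..0}|lborel. (cmod (U x))\<^sup>2)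
     + \<rho>2 * (LINT x:{0..L}|lborel. (cmod (V x))\<^sup>2)
     + k1 * (LINT x:{-L..0}|lborel. (cmod (d1 (-L) 0 u x))\<^sup>2)
     + k2 * (LINT x:{0..L}|lborel. (cmod (d1 0 L v x))\<^sup>2)
     + frakC \<alpha> * (LINT p:({-L..0} \<times> UNIV)|lborel. (cmod (\<phi>1 (fst p) (snd p)))\<^sup>2)
     + frakC \<alpha> * (LINT p:({0..L} \<times> UNIV)|lborel. (cmod (\<phi>2 (fst p) (snd p)))\<^sup>2))"

definition Hnorm :: "real \<Rightarrow> real \<Rightarrow> real \<Rightarrow> real \<Rightarrow> real \<Rightarrow> real \<Rightarrow> state \<Rightarrow> real" where
  "Hnorm \<rho>1 \<rho>2 k1 k2 \<alpha> L W = sqrt (Hnorm2 \<rho>1 \<rho>2 k1 k2 \<alpha> L W)"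

definition st_add :: "state \<Rightarrow> state \<Rightarrow> state" where
  "st_add W W' = (case W of (u, v, U, V, \<phi>1, \<phi>2) \<Rightarrow> case W' of (u', v', U', V', \<psi>1, \<psi>2) \<Rightarrow>
     (\<lambda>x. u x + u' x, \<lambda>x. v x + v' x, \<lambda>x. U x + U' x, \<lambda>x. V x + V' x,
      \<lambda>x \<xi>. \<phi>1 x \<xi> + \<psi>1 x \<xi>, \<lambda>x \<xi>. \<phi>2 x \<xi> + \<psi>2 x \<xi>))"

definition st_scale :: "complex \<Rightarrow> state \<Rightarrow> state" where
  "st_scale c W = (case W of (u, v, U, V, \<phi>1, \<phi>2) \<Rightarrow>
     (\<lambda>x. c * u x, \<lambda>x. c * v x, \<lambda>x. c * U x, \<lambda>x. c * V x,
      \<lambda>x \<xi>. c * \<phi>1 x \<xi>, \<lambda>x \<xi>. c * \<phi>2 x \<xi>))"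

definition st_diff :: "state \<Rightarrow> state \<Rightarrow> state" where
  "st_diff W W' = st_add W (st_scale (-1) W')"

definition Heq :: "real \<Rightarrow> real \<Rightarrow> real \<Rightarrow> real \<Rightarrow> real \<Rightarrow> real \<Rightarrow> state \<Rightarrow> state \<Rightarrow> bool" where
  "Heq \<rho>1 \<rho>2 k1 k2 \<alpha> L W W' \<longleftrightarrow>
     inH L (st_diff W W') \<and> Hnorm2 \<rho>1 \<rho>2 k1 k2 \<alpha> L (st_diff W W') = 0"

definition inDA :: "real \<Rightarrow> real \<Rightarrow> real \<Rightarrow> real \<Rightarrow> real \<Rightarrow> state \<Rightarrow> bool" where
  "inDA k1 k2 \<alpha> L \<eta> W = (case W of (u, v, U, V, \<phi>1, \<phi>2) \<Rightarrow>
     inH L W \<and> H10 L U V \<and>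
     (\<exists>g1 h1 g2 h2. has_L2_deriv (-L) 0 u g1 \<and> has_L2_deriv (-L) 0 g1 h1 \<and>
                    has_L2_deriv 0 L v g2 \<and> has_L2_deriv 0 L g2 h2 \<and>
                    of_real k1 * g1 0 = of_real k2 * g2 0) \<and>
     L2on ({-L..0} \<times> UNIV) (\<lambda>(x, \<xi>). of_real \<bar>\<xi>\<bar> * \<phi>1 x \<xi>) \<and>
     L2on ({-L..0} \<times> UNIV) (\<lambda>(x, \<xi>). - of_real (\<bar>\<xi>\<bar>\<^sup>2 + \<eta>) * \<phi>1 x \<xi> + of_real (mu \<alpha> \<xi>) * U x) \<and>
     L2on ({0..L} \<times> UNIV) (\<lambda>(x, \<xi>). of_real \<bar>\<xi>\<bar> * \<phi>2 x \<xi>) \<and>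
     L2on ({0..L} \<times> UNIV) (\<lambda>(x, \<xi>). - of_real (\<bar>\<xi>\<bar>\<^sup>2 + \<eta>) * \<phi>2 x \<xi> + of_real (mu \<alpha> \<xi>) * V x))"

definition Aop :: "real \<Rightarrow> real \<Rightarrow> real \<Rightarrow> real \<Rightarrow> real \<Rightarrow> real \<Rightarrow> real \<Rightarrow> state \<Rightarrow> state" where
  "Aop \<rho>1 \<rho>2 k1 k2 \<alpha> L \<eta> W = (case W of (u, v, U, V, \<phi>1, \<phi>2) \<Rightarrow>
     (U, V,
      \<lambda>x. (of_real k1 * d2 (-L) 0 u x
            - of_real (frakC \<alpha>) * (LINT \<xi>|lborel. of_real (mu \<alpha> \<xi>) * \<phi>1 x \<xi>)) / of_real \<rho>1,
      \<lambda>x. (of_real k2 * d2 0 L v x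
            - of_real (frakC \<alpha>) * (LINT \<xi>|lborel. of_real (mu \<alpha> \<xi>) * \<phi>2 x \<xi>)) / of_real \<rho>2,
      \<lambda>x \<xi>. - of_real (\<bar>\<xi>\<bar>\<^sup>2 + \<eta>) * \<phi>1 x \<xi> + of_real (mu \<alpha> \<xi>) * U x,
      \<lambda>x \<xi>. - of_real (\<bar>\<xi>\<bar>\<^sup>2 + \<eta>) * \<phi>2 x \<xi> + of_real (mu \<alpha> \<xi>) * V x))"

definition op_invertible ::
  "real \<Rightarrow> real \<Rightarrow> real \<Rightarrow> real \<Rightarrow> real \<Rightarrow> real \<Rightarrow> (state \<Rightarrow> bool) \<Rightarrow> (state \<Rightarrow> state) \<Rightarrow> bool" where
  "op_invertible \<rho>1 \<rho>2 k1 k2 \<alpha> L D T \<longleftrightarrow>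
     (\<forall>W W'. D W \<and> D W' \<and> Heq \<rho>1 \<rho>2 k1 k2 \<alpha> L (T W) (T W') \<longrightarrow> Heq \<rho>1 \<rho>2 k1 k2 \<alpha> L W W') \<and>
     (\<exists>C. \<forall>F. inH L F \<longrightarrow>
        (\<exists>W. D W \<and> Heq \<rho>1 \<rho>2 k1 k2 \<alpha> L (T W) F \<and>
             Hnorm \<rho>1 \<rho>2 k1 k2 \<alpha> L W \<le> C * Hnorm \<rho>1 \<rho>2 k1 k2 \<alpha> L F))"

definition resolvent_set_A :: "real \<Rightarrow> real \<Rightarrow> real \<Rightarrow> real \<Rightarrow> real \<Rightarrow> real \<Rightarrow> real \<Rightarrow> complex set" where
  "resolvent_set_A \<rho>1 \<rho>2 k1 k2 \<alpha> L \<eta> =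
     {z. op_invertible \<rho>1 \<rho>2 k1 k2 \<alpha> L (inDA k1 k2 \<alpha> L \<eta>)
            (\<lambda>W. st_diff (st_scale z W) (Aop \<rho>1 \<rho>2 k1 k2 \<alpha> L \<eta> W))}"

definition spectrum_A :: "real \<Rightarrow> real \<Rightarrow> real \<Rightarrow> real \<Rightarrow> real \<Rightarrow> real \<Rightarrow> real \<Rightarrow> complex set" where
  "spectrum_A \<rho>1 \<rho>2 k1 k2 \<alpha> L \<eta> = - resolvent_set_A \<rho>1 \<rho>2 k1 k2 \<alpha> L \<eta>"

end

theory Submission
  imports Defs
begin

text \<open>Without damping (\<eta> = 0) the memory components of \<open>A W\<close> are
  \<open>-\<xi>\<^sup>2 \<phi>\<^sub>1 + \<mu>(\<xi>) U\<close>, and nothing prevents \<open>\<xi>\<^sup>2\<close> from vanishing. Take the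
  right-hand side F whose only non-zero component is \<open>\<one>\<^sub>{0 < \<xi> \<le> 1}\<close> in the
  \<open>\<phi>\<^sub>1\<close> slot. If \<open>A W = F\<close> in H, the first components force \<open>U\<^sub>x = 0\<close>, so
  \<open>U = 0\<close> by the boundary condition; then \<open>|\<phi>\<^sub>1(x,\<xi>)| = \<xi>\<^sup>-\<^sup>2\<close> for
  \<open>0 < \<xi> \<le> 1\<close>, which is not square integrable. Hence F is not in the range of A,
  and the same argument for \<open>0\<cdot>I - A = -A\<close> puts 0 in the spectrum.\<close>

lemma set_integral_nonneg:
  fixes f :: "'a \<Rightarrow> real"
  assumes "\<And>x. 0 \<le> f x"
  shows "0 \<le> (LINT x:S|M. f x)"
  unfolding set_lebesgue_integral_def
  by (rule integral_nonneg_AE) (simp add: assms)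

lemma AE_eq_0_if_set_integral_norm_square_eq_0:
  fixes h :: "'a \<Rightarrow> 'b::real_normed_vector"
  assumes "set_integrable M S (\<lambda>p. (norm (h p))\<^sup>2)" and "(LINT p:S|M. (norm (h p))\<^sup>2) = 0"
  shows "AE p\<in>S in M. h p = 0"
proof -
  have "AE p in M. indicator S p *\<^sub>R (norm (h p))\<^sup>2 = (0::real)"
    using assms unfolding set_integrable_def set_lebesgue_integral_def
    by (subst integral_nonneg_eq_0_iff_AE[symmetric]) (auto simp: indicator_def)
  then show ?thesis
    by eventually_elim (auto simp: indicator_def split: if_splits)
qed

lemma has_L2_deriv_d1: "H1 a b w \<Longrightarrow> has_L2_deriv a b w (d1 a b w)"
  unfolding H1_def d1_def by (metis someI_ex)

lemma H1_eq_0_if_d1_norm_eq_0: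
  assumes "H1 a b w" "w a = 0" "(LINT x:{a..b}|lborel. (cmod (d1 a b w x))\<^sup>2) = 0" "x \<in> {a..b}"
  shows "w x = 0"
proof -
  have deriv: "has_L2_deriv a b w (d1 a b w)"
    using assms(1) by (rule has_L2_deriv_d1)
  then have "AE t\<in>{a..b} in lborel. d1 a b w t = 0"
    using assms(3) unfolding has_L2_deriv_def L2on_def
    by (intro AE_eq_0_if_set_integral_norm_square_eq_0) auto
  then have "(LINT t:{a..x}|lborel. d1 a b w t) = 0"
    unfolding set_lebesgue_integral_def
    by (intro integral_eq_zero_AE, eventually_elim) (use assms(4) in \<open>auto simp: indicator_def\<close>)
  then show ?thesis
    using deriv assms(2,4) unfolding has_L2_deriv_def by auto
qed

lemma emeasure_lborel_Times_interval:
  fixes a b c d :: real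
  assumes "a \<le> b" "c \<le> d"
  shows "emeasure lborel ({a..b} \<times> {c<..d}) = ennreal ((b - a) * (d - c))"
proof -
  have "emeasure (lborel \<Otimes>\<^sub>M lborel) ({a..b} \<times> {c<..d}) = emeasure lborel {a..b} * emeasure lborel {c<..d}"
    by (intro sigma_finite_measure.emeasure_pair_measure_Times lborel.sigma_finite_measure_axioms) auto
  then show ?thesis
    using assms by (simp add: lborel_prod ennreal_mult)
qed

lemma set_integral_ge_measure:
  fixes f :: "'a \<Rightarrow> real"
  assumes "set_integrable M S f" "\<And>x. 0 \<le> f x"
    and "B \<subseteq> S" "B \<in> sets M" "emeasure M B < \<infinity>" "AE x\<in>B in M. c \<le> f x"
  shows "c * measure M B \<le> (LINT x:S|M. f x)"
proof -
  have "c * measure M B = (LINT x|M. c * indicator B x)"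
    using assms(4,5) by (simp add: measure_def)
  also have "\<dots> \<le> (LINT x:S|M. f x)"
    unfolding set_lebesgue_integral_def
  proof (rule integral_mono_AE)
    show "integrable M (\<lambda>x. c * indicator B x)"
      using assms(4,5) by (intro integrable_mult_right integrable_real_indicator) auto
    show "integrable M (\<lambda>x. indicator S x *\<^sub>R f x)"
      using assms(1) unfolding set_integrable_def .
    show "AE x in M. c * indicator B x \<le> indicator S x *\<^sub>R f x"
      using assms(6) by eventually_elim (use assms(2,3) in \<open>auto simp: indicator_def\<close>)
  qed
  finally show ?thesis .
qed

lemma inverse_square_le_norm_square:
  fixes \<xi> y :: real and n :: nat
  assumes "0 < \<xi>" "\<xi> \<le> 1 / real n" "\<xi>\<^sup>2 * y = 1"
  shows "real n ^ 4 \<le> y\<^sup>2"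
proof -
  have "real n * \<xi> \<le> 1"
    using assms(1,2) by (cases "n = 0") (auto simp: field_simps)
  then have "(real n * \<xi>)\<^sup>2 \<le> 1"
    using assms(1) by (simp add: power_le_one)
  moreover have "0 \<le> y"
    using assms by (metis zero_le_mult_iff zero_le_one zero_less_power2 less_le_not_le)
  ultimately have "(real n * \<xi>)\<^sup>2 * y \<le> y"
    by (simp add: mult_left_le_one_le)
  moreover have "(real n * \<xi>)\<^sup>2 * y = real n ^ 2 * (\<xi>\<^sup>2 * y)"
    by (simp add: power_mult_distrib ac_simps)
  ultimately have "real n ^ 2 \<le> y"
    using assms(3) by simp
  then have "(real n ^ 2)\<^sup>2 \<le> y\<^sup>2"
    by (intro power_mono) auto
  then show ?thesis
    by simp
qed

lemma not_set_integrable_inverse_square: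
  fixes f :: "real \<times> real \<Rightarrow> 'a::real_normed_vector"
  assumes "a < b" and inv_square: "AE p\<in>{a..b} \<times> {0<..1} in lborel. (snd p)\<^sup>2 * norm (f p) = 1"
  shows "\<not> set_integrable lborel ({a..b} \<times> UNIV) (\<lambda>p. (norm (f p))\<^sup>2)"
proof
  assume int: "set_integrable lborel ({a..b} \<times> UNIV) (\<lambda>p. (norm (f p))\<^sup>2)"
  define I where "I = (LINT p:({a..b} \<times> UNIV)|lborel. (norm (f p))\<^sup>2)"
  have lower: "real n ^ 3 * (b - a) \<le> I" if "n > 0" for n :: nat
  proof -
    define B where "B = {a..b} \<times> {0<..1 / real n}"
    have B_sets: "B \<in> sets lborel"
      unfolding B_def by (simp add: borel_Times)
    have B_emeasure: "emeasure lborel B = ennreal ((b - a) / real n)"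
      unfolding B_def using assms(1) by (simp add: emeasure_lborel_Times_interval)
    have "AE p\<in>B in lborel. real n ^ 4 \<le> (norm (f p))\<^sup>2"
      using inv_square
    proof eventually_elim
      case (elim p)
      show ?case
      proof
        assume "p \<in> B"
        moreover have "1 / real n \<le> 1"
          using that by simp
        ultimately show "real n ^ 4 \<le> (norm (f p))\<^sup>2"
          using elim unfolding B_def by (intro inverse_square_le_norm_square[where \<xi> = "snd p"]) auto
      qed
    qed
    then have "real n ^ 4 * measure lborel B \<le> I"
      unfolding I_def using int B_sets B_emeasure
      by (intro set_integral_ge_measure) (auto simp: B_def)
    moreover have "real n ^ 4 * measure lborel B = real n ^ 3 * (b - a)"
      using B_emeasure assms(1) that by (simp add: measure_def power_eq_if)
    ultimately show ?thesis
      by simp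
  qed
  define n where "n = nat \<lceil>I / (b - a)\<rceil> + 1"
  have "I / (b - a) < real n"
    unfolding n_def by linarith
  then have "I < real n * (b - a)"
    using assms(1) by (simp add: pos_divide_less_eq)
  also have "\<dots> \<le> real n ^ 3 * (b - a)"
    using assms(1) by (intro mult_right_mono) (auto simp: n_def power_increasing[of 1 3, simplified])
  also have "\<dots> \<le> I"
    using lower[of n] by (simp add: n_def)
  finally show False
    by simp
qed

definition indicator_rhs :: state where
  "indicator_rhs = (\<lambda>_. 0, \<lambda>_. 0, \<lambda>_. 0, \<lambda>_. 0, \<lambda>x \<xi>. indicator {0<..1} \<xi>, \<lambda>_ _. 0)"

lemma L2on_zero: "L2on S (\<lambda>_. 0)"
  unfolding L2on_def set_integrable_def set_borel_measurable_def by simp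

lemma H1_zero: "H1 a b (\<lambda>_. 0)"
  unfolding H1_def has_L2_deriv_def
  by (rule exI[of _ "\<lambda>_. 0"]) (simp add: L2on_zero set_lebesgue_integral_def)

lemma inH_indicator_rhs:
  assumes "0 \<le> L"
  shows "inH L indicator_rhs"
proof -
  have "set_borel_measurable lborel ({-L..0} \<times> UNIV) (\<lambda>(x::real, \<xi>::real). indicator {0<..1::real} \<xi> :: complex)"
  proof -
    have "(\<lambda>p::real \<times> real. snd p) \<in> borel_measurable borel"
      by (intro borel_measurable_continuous_onI continuous_intros)
    then have "(\<lambda>p::real \<times> real. indicator {0<..1::real} (snd p) :: complex) \<in> borel_measurable borel"
      by (rule measurable_compose) simp
    then show ?thesis
      unfolding set_borel_measurable_def case_prod_beta' measurable_lborel1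
      by (intro borel_measurable_scaleR borel_measurable_indicator) (auto simp: borel_Times)
  qed
  moreover have "set_integrable lborel ({-L..0} \<times> UNIV)
      (\<lambda>(x::real, \<xi>::real). (cmod (indicator {0<..1::real} \<xi> :: complex))\<^sup>2)"
  proof -
    have "(\<lambda>p. indicator ({-L..0} \<times> UNIV) p *\<^sub>R (\<lambda>(x, \<xi>). (cmod (indicator {0<..1::real} \<xi> :: complex))\<^sup>2) p)
        = indicator ({-L..0} \<times> {0<..1})"
      by (auto simp: fun_eq_iff indicator_def)
    moreover have "emeasure lborel ({-L..0} \<times> {0<..1::real}) < \<infinity>"
      using assms by (simp add: emeasure_lborel_Times_interval)
    ultimately show ?thesis
      unfolding set_integrable_def by (simp add: borel_Times)
  qed
  ultimately have "L2on ({-L..0} \<times> UNIV) (\<lambda>(x::real, \<xi>::real). indicator {0<..1::real} \<xi> :: complex)"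
    unfolding L2on_def by (simp add: case_prod_beta')
  then show ?thesis
    unfolding inH_def indicator_rhs_def H10_def
    by (simp add: L2on_zero H1_zero case_prod_beta')
qed

lemma Hnorm2_eq_0_D:
  assumes "0 \<le> \<rho>1" "0 \<le> \<rho>2" "0 < k1" "0 \<le> k2" "0 < frakC \<alpha>"
    and "Hnorm2 \<rho>1 \<rho>2 k1 k2 \<alpha> L (u, v, U, V, \<phi>1, \<phi>2) = 0"
  shows "(LINT x:{-L..0}|lborel. (cmod (d1 (-L) 0 u x))\<^sup>2) = 0"
    and "(LINT p:({-L..0} \<times> UNIV)|lborel. (cmod (\<phi>1 (fst p) (snd p)))\<^sup>2) = 0"
proof -
  let ?t1 = "LINT x:{-L..0}|lborel. (cmod (U x))\<^sup>2"
  let ?t2 = "LINT x:{0..L}|lborel. (cmod (V x))\<^sup>2"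
  let ?t3 = "LINT x:{-L..0}|lborel. (cmod (d1 (-L) 0 u x))\<^sup>2"
  let ?t4 = "LINT x:{0..L}|lborel. (cmod (d1 0 L v x))\<^sup>2"
  let ?t5 = "LINT p:({-L..0} \<times> UNIV)|lborel. (cmod (\<phi>1 (fst p) (snd p)))\<^sup>2"
  let ?t6 = "LINT p:({0..L} \<times> UNIV)|lborel. (cmod (\<phi>2 (fst p) (snd p)))\<^sup>2"
  have "0 \<le> ?t1" "0 \<le> ?t2" "0 \<le> ?t3" "0 \<le> ?t4" "0 \<le> ?t5" "0 \<le> ?t6"
    by (auto intro: set_integral_nonneg)
  moreover have "\<rho>1 * ?t1 + \<rho>2 * ?t2 + k1 * ?t3 + k2 * ?t4 + frakC \<alpha> * ?t5 + frakC \<alpha> * ?t6 = 0"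
    using assms(6) by (simp add: Hnorm2_def)
  ultimately have "k1 * ?t3 = 0" "frakC \<alpha> * ?t5 = 0"
    using assms(1-5) by (smt (verit) mult_nonneg_nonneg mult_pos_pos)+
  then show "?t3 = 0" "?t5 = 0"
    using assms(3,5) by auto
qed

lemma not_Heq_indicator_rhs:
  fixes s :: complex
  assumes "0 \<le> \<rho>1" "0 \<le> \<rho>2" "0 < k1" "0 \<le> k2" "0 < frakC \<alpha>" "0 < L"
    and \<phi>_L2: "L2on ({-L..0} \<times> UNIV) (\<lambda>(x, \<xi>). \<phi> x \<xi>)"
    and "cmod s = 1"
    and U'_eq: "\<And>x. U' x = s * U x"
    and \<Phi>_eq: "\<And>x \<xi>. \<Phi> x \<xi> = s * (- of_real (\<xi>\<^sup>2) * \<phi> x \<xi> + of_real (mu \<alpha> \<xi>) * U x)"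
  shows "\<not> Heq \<rho>1 \<rho>2 k1 k2 \<alpha> L (U', v', g, h, \<Phi>, \<Phi>') indicator_rhs"
proof
  define \<Psi> where "\<Psi> x \<xi> = \<Phi> x \<xi> - indicator {0<..1} \<xi>" for x \<xi>
  have "st_diff (U', v', g, h, \<Phi>, \<Phi>') indicator_rhs = (U', v', g, h, \<Psi>, \<Phi>')"
    by (simp add: st_diff_def st_add_def st_scale_def indicator_rhs_def \<Psi>_def fun_eq_iff)
  moreover assume "Heq \<rho>1 \<rho>2 k1 k2 \<alpha> L (U', v', g, h, \<Phi>, \<Phi>') indicator_rhs"
  ultimately have inH: "inH L (U', v', g, h, \<Psi>, \<Phi>')"
    and norm: "Hnorm2 \<rho>1 \<rho>2 k1 k2 \<alpha> L (U', v', g, h, \<Psi>, \<Phi>') = 0"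
    unfolding Heq_def by auto
  have U_0: "U x = 0" if "x \<in> {-L..0}" for x
  proof -
    have "U' x = 0"
      using inH Hnorm2_eq_0_D(1)[OF assms(1-5) norm] that
      unfolding inH_def H10_def by (intro H1_eq_0_if_d1_norm_eq_0) auto
    then show ?thesis
      using U'_eq[of x] assms(8) by auto
  qed
  have "AE p\<in>{-L..0} \<times> UNIV in lborel. \<Psi> (fst p) (snd p) = 0"
    using inH Hnorm2_eq_0_D(2)[OF assms(1-5) norm]
    unfolding inH_def L2on_def by (intro AE_eq_0_if_set_integral_norm_square_eq_0) (auto simp: case_prod_beta')
  then have "AE p\<in>{-L..0} \<times> {0<..1} in lborel. (snd p)\<^sup>2 * norm (\<phi> (fst p) (snd p)) = 1"
  proof eventually_elim
    case (elim p)
    show ?case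
    proof
      assume p: "p \<in> {-L..0} \<times> {0<..1}"
      then have "s * (- of_real ((snd p)\<^sup>2) * \<phi> (fst p) (snd p)) = 1"
        using elim U_0[of "fst p"] \<Phi>_eq[of "fst p" "snd p"] by (auto simp: \<Psi>_def)
      then show "(snd p)\<^sup>2 * norm (\<phi> (fst p) (snd p)) = 1"
        using assms(8) by (metis norm_mult norm_one norm_minus_cancel norm_of_real abs_power2 mult_1 mult.assoc mult_minus_left)
    qed
  qed
  then have "\<not> set_integrable lborel ({-L..0} \<times> UNIV) (\<lambda>p. (norm (\<phi> (fst p) (snd p)))\<^sup>2)"
    using assms(6) by (intro not_set_integrable_inverse_square) auto
  then show False
    using \<phi>_L2 unfolding L2on_def by (simp add: case_prod_beta')
qed

lemma frakC_pos: "0 < \<alpha> \<Longrightarrow> \<alpha> < 1 \<Longrightarrow> 0 < frakC \<alpha>"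
  unfolding frakC_def by (intro divide_pos_pos sin_gt_zero) auto

lemma not_Heq_Aop_indicator_rhs:
  assumes "0 \<le> \<rho>1" "0 \<le> \<rho>2" "0 < k1" "0 \<le> k2" "0 < L" "0 < \<alpha>" "\<alpha> < 1"
    and "inDA k1 k2 \<alpha> L 0 W"
  shows "\<not> Heq \<rho>1 \<rho>2 k1 k2 \<alpha> L (Aop \<rho>1 \<rho>2 k1 k2 \<alpha> L 0 W) indicator_rhs"
    and "\<not> Heq \<rho>1 \<rho>2 k1 k2 \<alpha> L (st_diff (st_scale 0 W) (Aop \<rho>1 \<rho>2 k1 k2 \<alpha> L 0 W)) indicator_rhs"
proof -
  obtain u v U V \<phi>1 \<phi>2 where W: "W = (u, v, U, V, \<phi>1, \<phi>2)"
    by (cases W)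
  then have \<phi>1_L2: "L2on ({-L..0} \<times> UNIV) (\<lambda>(x, \<xi>). \<phi>1 x \<xi>)"
    using assms(8) unfolding inDA_def inH_def by auto
  have C_pos: "0 < frakC \<alpha>"
    using assms(6,7) by (rule frakC_pos)
  show "\<not> Heq \<rho>1 \<rho>2 k1 k2 \<alpha> L (Aop \<rho>1 \<rho>2 k1 k2 \<alpha> L 0 W) indicator_rhs"
    unfolding W Aop_def prod.case
    by (rule not_Heq_indicator_rhs[where s = 1 and U = U and \<phi> = \<phi>1])
      (use assms \<phi>1_L2 C_pos in simp_all)
  show "\<not> Heq \<rho>1 \<rho>2 k1 k2 \<alpha> L (st_diff (st_scale 0 W) (Aop \<rho>1 \<rho>2 k1 k2 \<alpha> L 0 W)) indicator_rhs"
    unfolding W Aop_def st_diff_def st_add_def st_scale_def prod.case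
    by (rule not_Heq_indicator_rhs[where s = "-1" and U = U and \<phi> = \<phi>1])
      (use assms \<phi>1_L2 C_pos in simp_all)
qed

lemma not_op_invertible_if_not_in_range:
  assumes "inH L F" and "\<And>W. D W \<Longrightarrow> \<not> Heq \<rho>1 \<rho>2 k1 k2 \<alpha> L (T W) F"
  shows "\<not> op_invertible \<rho>1 \<rho>2 k1 k2 \<alpha> L D T"
  using assms unfolding op_invertible_def by blast

theorem proposition4p4:
  fixes \<rho>1 \<rho>2 k1 k2 L \<alpha> :: real
  assumes "\<rho>1 > 0" "\<rho>2 > 0" "k1 > 0" "k2 > 0" "L > 0" "0 < \<alpha>" "\<alpha> < 1"
  shows "\<not> op_invertible \<rho>1 \<rho>2 k1 k2 \<alpha> L (inDA k1 k2 \<alpha> L 0) (Aop \<rho>1 \<rho>2 k1 k2 \<alpha> L 0)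
         \<and> (0::complex) \<in> spectrum_A \<rho>1 \<rho>2 k1 k2 \<alpha> L 0"
proof
  have rhs: "inH L indicator_rhs"
    using assms(5) by (simp add: inH_indicator_rhs)
  note not_in_range = not_Heq_Aop_indicator_rhs[of \<rho>1 \<rho>2 k1 k2 L \<alpha>]
  show "\<not> op_invertible \<rho>1 \<rho>2 k1 k2 \<alpha> L (inDA k1 k2 \<alpha> L 0) (Aop \<rho>1 \<rho>2 k1 k2 \<alpha> L 0)"
    using rhs not_in_range(1) assms by (intro not_op_invertible_if_not_in_range) auto
  have "\<not> op_invertible \<rho>1 \<rho>2 k1 k2 \<alpha> L (inDA k1 k2 \<alpha> L 0)
      (\<lambda>W. st_diff (st_scale 0 W) (Aop \<rho>1 \<rho>2 k1 k2 \<alpha> L 0 W))"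
    using rhs not_in_range(2) assms by (intro not_op_invertible_if_not_in_range) auto
  then show "(0::complex) \<in> spectrum_A \<rho>1 \<rho>2 k1 k2 \<alpha> L 0"
    unfolding spectrum_A_def resolvent_set_A_def by simp
qed

end
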